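(* Let $sc_2(\mathcal{D}_n)$ be the number of saturated chains of length 2 in the Dyck lattice $\mathcal{D}_n$. Then $$ \sum_{n\ge0} sc_2(\mathcal{D}_n)x^n=\frac{1-6x+6x^2-(1-4x)\sqrt{1-4x}}{-(1-4x)\sqrt{1-4x}}, $$ and for every $n\ge1$, $$ sc_2(\mathcal{D}_n)=\binom{2n}{n}\frac{(n-1)(n-2)}{2(2n-1)}. $$
   Context: A Dyck path of semilength $n$ is a lattice path from $(0,0)$ to $(2n,0)$ with steps $(1,1)$ and $(1,-1)$ never going below the $x$-axis. $\mathcal{D}_n$ is the set of Dyck paths of semilength $n$ ordered by containment: $\gamma\le\gamma'$ iff $\gamma$ lies weakly below $\gamma'$. A saturated chain of length $h$ is a sequence $\gamma^{(0)}<\cdots<\gamma^{(h)}$ in which each element covers the previous one. *)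

theory Defs
  imports Complex_Main
begin

text \<open>A lattice path is a list of steps: True = up step (1,1), False = down step (1,-1).\<close>

definition height :: "bool list \<Rightarrow> nat \<Rightarrow> int" where
  "height p i = (\<Sum>s\<leftarrow>take i p. if s then 1 else -1)"

definition dyck_paths :: "nat \<Rightarrow> bool list set" where
  "dyck_paths n = {p. length p = 2 * n \<and> (\<forall>i\<le>2 * n. height p i \<ge> 0) \<and> height p (2 * n) = 0}"

definition path_le :: "bool list \<Rightarrow> bool list \<Rightarrow> bool" where
  "path_le p q = (\<forall>i\<le>length p. height p i \<le> height q i)"

definition path_less :: "bool list \<Rightarrow> bool list \<Rightarrow> bool" where
  "path_less p q = (path_le p q \<and> p \<noteq> q)"

definition covers_in :: "nat \<Rightarrow> bool list \<Rightarrow> bool list \<Rightarrow> bool" where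
  "covers_in n p q = (p \<in> dyck_paths n \<and> q \<in> dyck_paths n \<and> path_less p q \<and>
     \<not> (\<exists>r\<in>dyck_paths n. path_less p r \<and> path_less r q))"

definition sat_chains2 :: "nat \<Rightarrow> (bool list \<times> bool list \<times> bool list) set" where
  "sat_chains2 n = {(a, b, c). covers_in n a b \<and> covers_in n b c}"

definition sc2 :: "nat \<Rightarrow> nat" where
  "sc2 n = card (sat_chains2 n)"

end

theory Submission
  imports Defs "HOL-Computational_Algebra.Formal_Power_Series"
    "HOL-Analysis.Generalised_Binomial_Theorem"
begin

text \<open>A Dyck path \<open>q\<close> covers \<open>p\<close> exactly when \<open>q\<close> is obtained from \<open>p\<close> by turning one
  valley \<open>DU\<close> into a peak \<open>UD\<close>; dually, the paths covered by \<open>q\<close> arise by turning a peak of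
  \<open>q\<close> of height at least two into a valley. A saturated chain \<open>a < b < c\<close> is therefore a
  middle path \<open>b\<close> together with a high peak and a valley of \<open>b\<close>, so \<open>sc\<^sub>2(D\<^sub>n)\<close> is the
  sum over \<open>D\<^sub>n\<close> of (number of high peaks) \<open>\<times>\<close> (number of valleys).
  The first-return decomposition \<open>U b D c\<close> turns the generating functions of these statistics
  into a polynomial system over the Catalan series \<open>G = 1 + x G\<^sup>2\<close>. Its solution is
  \<open>1 - (1 - 6x + 6x\<^sup>2) (1 - 2xG)\<^sup>-\<^sup>3\<close>, and \<open>(1 - 2xG)\<^sup>2 = 1 - 4x\<close>; expanding
  \<open>(1 - 4x)\<^sup>-\<^sup>3\<^sup>/\<^sup>2 = \<Sum> (2n + 1) binom(2n, n) x\<^sup>n\<close> gives both statements.\<close>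

unbundle no vec_syntax and fps_syntax

lemma height_0 [simp]: "height p 0 = 0"
  by (simp add: height_def)

lemma height_Cons_Suc [simp]: "height (x # p) (Suc k) = (if x then 1 else -1) + height p k"
  by (simp add: height_def)

lemma height_beyond_length: "length p \<le> k \<Longrightarrow> height p k = height p (length p)"
  by (simp add: height_def)

lemma height_Suc:
  "height p (Suc k) = height p k + (if k < length p then (if p ! k then 1 else -1) else 0)"
  by (simp add: height_def take_Suc_conv_app_nth)

lemma even_height_plus_index: "k \<le> length p \<Longrightarrow> even (height p k + int k)"
  by (induction k) (auto simp: height_Suc)

lemma eq_if_heights_eq:
  assumes "length p = length q" and "\<And>k. k \<le> length p \<Longrightarrow> height p k = height q k"
  shows "p = q"
proof (rule nth_equalityI)
  fix k assume "k < length p"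
  with assms have "height p (Suc k) = height q (Suc k)" and "height p k = height q k"
    by auto
  with \<open>k < length p\<close> assms(1) show "p ! k = q ! k"
    by (auto simp: height_Suc split: if_splits)
qed fact

fun dyck_from :: "nat \<Rightarrow> bool list \<Rightarrow> bool" where
  "dyck_from h [] \<longleftrightarrow> h = 0"
| "dyck_from h (x # p) \<longleftrightarrow> (if x then dyck_from (Suc h) p else 0 < h \<and> dyck_from (h - 1) p)"

lemma dyck_from_iff:
  "dyck_from h p \<longleftrightarrow>
     (\<forall>i\<le>length p. 0 \<le> int h + height p i) \<and> int h + height p (length p) = 0"
proof (induction p arbitrary: h)
  case (Cons x p)
  have "(\<forall>i\<le>length (x # p). 0 \<le> int h + height (x # p) i) \<longleftrightarrow>
        (\<forall>i\<le>length p. 0 \<le> int h + height (x # p) (Suc i))"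
    by (simp only: length_Cons less_Suc_eq_le[symmetric] All_less_Suc2) simp
  with Cons.IH[of "Suc h"] Cons.IH[of "h - 1"] show ?case
    by (cases x; cases "h = 0") (auto simp: algebra_simps of_nat_diff dest: spec[of _ 0])
qed simp

lemma mem_dyck_paths_iff: "p \<in> dyck_paths n \<longleftrightarrow> length p = 2 * n \<and> dyck_from 0 p"
  by (auto simp: dyck_paths_def dyck_from_iff)

lemma dyck_paths_0: "dyck_paths 0 = {[]}"
  by (auto simp: mem_dyck_paths_iff)

lemma finite_dyck_paths [simp]: "finite (dyck_paths n)"
proof (rule finite_subset)
  show "dyck_paths n \<subseteq> {xs. set xs \<subseteq> UNIV \<and> length xs = 2 * n}"
    by (auto simp: dyck_paths_def)
qed (rule finite_lists_length_eq, simp)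

lemma dyck_paths_height_nonneg: "p \<in> dyck_paths n \<Longrightarrow> 0 \<le> height p k"
  by (cases "k \<le> 2 * n") (auto simp: dyck_paths_def height_beyond_length[of p k])

lemma dyck_from_append: "dyck_from a xs \<Longrightarrow> dyck_from b ys \<Longrightarrow> dyck_from (a + b) (xs @ ys)"
proof (induction xs arbitrary: a)
  case (Cons x xs)
  show ?case
  proof (cases x)
    case False
    with Cons.prems have "0 < a" "dyck_from (a - 1) xs" by auto
    with Cons.IH[of "a - 1"] Cons.prems False show ?thesis by simp
  qed (use Cons.IH[of "Suc a"] Cons.prems in simp)
qed simp

lemma dyck_from_append_right: "dyck_from a xs \<Longrightarrow> dyck_from a (xs @ ys) \<Longrightarrow> dyck_from 0 ys"
  by (induction xs arbitrary: a) (auto split: if_splits)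

lemma dyck_from_0_last: "dyck_from 0 p \<Longrightarrow> p \<noteq> [] \<Longrightarrow> \<not> last p"
proof -
  have "\<not> dyck_from h (ys @ [True])" for h ys
    by (induction ys arbitrary: h) (auto split: if_splits)
  then show "dyck_from 0 p \<Longrightarrow> p \<noteq> [] \<Longrightarrow> \<not> last p"
    by (metis append_butlast_last_id)
qed

lemma dyck_from_0_hd: "dyck_from 0 p \<Longrightarrow> p \<noteq> [] \<Longrightarrow> hd p"
  by (cases p) (auto split: if_splits)

lemma dyck_from_0_height_end: "dyck_from 0 p \<Longrightarrow> height p (length p) = 0"
  by (simp add: dyck_from_iff)

lemma even_length_if_dyck_from_0: "dyck_from 0 p \<Longrightarrow> even (length p)"
  using even_height_plus_index[of "length p" p] dyck_from_0_height_end[of p] by simp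

lemma dyck_from_Suc_split:
  "dyck_from (Suc h) p \<Longrightarrow> \<exists>b c. p = b @ False # c \<and> dyck_from 0 b \<and> dyck_from h c"
proof (induction "length p" arbitrary: p h rule: less_induct)
  case less
  show ?case
  proof (cases p)
    case (Cons x p')
    show ?thesis
    proof (cases x)
      case False
      with less.prems Cons show ?thesis
        by (intro exI[of _ "[]"] exI[of _ p']) auto
    next
      case True
      with less.prems Cons have "dyck_from (Suc (Suc h)) p'" by simp
      from less.hyps[OF _ this] Cons obtain b1 c1
        where 1: "p' = b1 @ False # c1" "dyck_from 0 b1" "dyck_from (Suc h) c1"
        by auto
      from less.hyps[OF _ 1(3)] 1 Cons obtain b2 c2
        where 2: "c1 = b2 @ False # c2" "dyck_from 0 b2" "dyck_from h c2"
        by auto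
      have "dyck_from 0 (True # b1 @ False # b2)"
        using dyck_from_append[OF 1(2), of 1 "False # b2"] 2(2) by simp
      with 1 2 Cons True show ?thesis
        by (intro exI[of _ "True # b1 @ False # b2"] exI[of _ c2]) auto
    qed
  qed (use less.prems in simp)
qed

lemma dyck_from_0_split_unique:
  assumes eq: "b @ False # c = b' @ False # c'" and "dyck_from 0 b" "dyck_from 0 b'"
  shows "b = b'"
proof -
  have False if "b @ False # c = b' @ False # c'" "dyck_from 0 b" "dyck_from 0 b'"
    "length b < length b'" for b b' c c'
  proof -
    have "take (length b) b' = b" and "b' ! length b = False"
      using arg_cong[OF that(1), of "take (length b)"] arg_cong[OF that(1), of "\<lambda>xs. xs ! length b"]
        that(4) by (simp_all add: nth_append)
    then have "b' = b @ False # drop (Suc (length b)) b'"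
      using id_take_nth_drop[OF that(4)] by simp
    with dyck_from_append_right[OF that(2), of "False # drop (Suc (length b)) b'"] that(3)
    show False
      by simp
  qed
  moreover have "length b \<noteq> length b' \<or> b = b'"
    using eq by (auto simp: append_eq_append_conv)
  ultimately show ?thesis
    using assms by (metis linorder_neqE_nat)
qed

definition flip :: "nat \<Rightarrow> bool list \<Rightarrow> bool list" where
  "flip i p = p[i := \<not> p ! i, Suc i := \<not> p ! Suc i]"

definition valleys :: "bool list \<Rightarrow> nat set" where
  "valleys p = {i. Suc i < length p \<and> \<not> p ! i \<and> p ! Suc i}"

definition high_peaks_from :: "int \<Rightarrow> bool list \<Rightarrow> nat set" where
  "high_peaks_from h p =
     {i. Suc i < length p \<and> p ! i \<and> \<not> p ! Suc i \<and> 2 \<le> h + height p (Suc i)}"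

lemma valleys_Nil [simp]: "valleys [] = {}"
  by (simp add: valleys_def)

lemma high_peaks_from_Nil [simp]: "high_peaks_from h [] = {}"
  by (simp add: high_peaks_from_def)

lemma finite_valleys [simp]: "finite (valleys p)"
  by (rule finite_subset[of _ "{..<length p}"]) (auto simp: valleys_def)

lemma finite_high_peaks_from [simp]: "finite (high_peaks_from h p)"
  by (rule finite_subset[of _ "{..<length p}"]) (auto simp: high_peaks_from_def)

lemma length_flip [simp]: "length (flip i p) = length p"
  by (simp add: flip_def)

lemma nth_flip:
  "Suc i < length p \<Longrightarrow> k < length p \<Longrightarrow>
     flip i p ! k = (if k = i \<or> k = Suc i then \<not> p ! k else p ! k)"
  by (auto simp: flip_def nth_list_update)

lemma flip_flip: "Suc i < length p \<Longrightarrow> flip i (flip i p) = p"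
  by (intro nth_equalityI) (auto simp: nth_flip)

lemma height_flip:
  assumes "Suc i < length p" and "p ! i \<noteq> p ! Suc i"
  shows "height (flip i p) k = height p k + (if k = Suc i then (if p ! i then -2 else 2) else 0)"
proof (induction k)
  case (Suc k)
  then show ?case
    using assms by (auto simp: height_Suc nth_flip)
qed simp

lemma flip_eq_flipD:
  assumes "Suc i < length p" "Suc j < length p" "p ! i \<noteq> p ! Suc i" "flip i p = flip j p"
  shows "i = j"
proof (rule ccontr)
  assume "i \<noteq> j"
  then have "flip i p ! min i j \<noteq> flip j p ! min i j"
    using assms(1-3) by (auto simp: nth_flip min_def)
  with assms(4) show False by simp
qed

lemma path_between_valley_flip:
  assumes i: "i \<in> valleys p" and len: "length r = length p"
    and below: "\<And>k. k \<le> length p \<Longrightarrow> height p k \<le> height r k"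
    and above: "\<And>k. k \<le> length p \<Longrightarrow> height r k \<le> height (flip i p) k"
  shows "r = p \<or> r = flip i p"
proof -
  from i have i': "Suc i < length p" "\<not> p ! i" "p ! Suc i"
    by (auto simp: valleys_def)
  have heights: "height (flip i p) k = height p k + (if k = Suc i then 2 else 0)" for k
    using height_flip[OF i'(1)] i' by simp
  have "even (height r (Suc i) - height p (Suc i))"
    using even_height_plus_index[of "Suc i" r] even_height_plus_index[of "Suc i" p] i' len
    by (metis Suc_leD Suc_le_eq even_add even_diff add_diff_cancel_right)
  moreover have "height p (Suc i) \<le> height r (Suc i)" "height r (Suc i) \<le> height p (Suc i) + 2"
    using below[of "Suc i"] above[of "Suc i"] i'(1) heights by auto
  ultimately consider "height r (Suc i) = height p (Suc i)"
    | "height r (Suc i) = height p (Suc i) + 2"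
    by (elim evenE) (smt (verit, ccfv_threshold))
  then show ?thesis
  proof cases
    case 1
    have "r = p"
    proof (rule eq_if_heights_eq)
      fix k assume "k \<le> length r"
      with len below[of k] above[of k] heights[of k] 1 show "height r k = height p k"
        by (cases "k = Suc i") auto
    qed (fact len)
    then show ?thesis ..
  next
    case 2
    have "r = flip i p"
    proof (rule eq_if_heights_eq)
      fix k assume "k \<le> length r"
      with len below[of k] above[of k] heights[of k] 2 show "height r k = height (flip i p) k"
        by (cases "k = Suc i") auto
    qed (simp add: len)
    then show ?thesis ..
  qed
qed

lemma flip_valley_in_dyck_paths:
  assumes p: "p \<in> dyck_paths n" and i: "i \<in> valleys p"
  shows "flip i p \<in> dyck_paths n"
proof -
  from i have "Suc i < length p" "\<not> p ! i" "p ! Suc i"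
    by (auto simp: valleys_def)
  with height_flip[of i p] p show ?thesis
    by (auto simp: dyck_paths_def add_nonneg_nonneg)
qed

lemma flip_high_peak_in_dyck_paths:
  assumes q: "q \<in> dyck_paths n" and i: "i \<in> high_peaks_from 0 q"
  shows "flip i q \<in> dyck_paths n"
proof -
  from i have "Suc i < length q" "q ! i" "\<not> q ! Suc i" "2 \<le> height q (Suc i)"
    by (auto simp: high_peaks_from_def)
  with height_flip[of i q] q show ?thesis
    by (auto simp: dyck_paths_def)
qed

lemma covers_in_flip_valley:
  assumes p: "p \<in> dyck_paths n" and i: "i \<in> valleys p"
  shows "covers_in n p (flip i p)"
proof -
  from i have i': "Suc i < length p" "\<not> p ! i" "p ! Suc i"
    by (auto simp: valleys_def)
  have le: "path_le p (flip i p)"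
    using height_flip[OF i'(1)] i' by (simp add: path_le_def)
  have ne: "p \<noteq> flip i p"
    using nth_flip[OF i'(1), of i] i' by auto
  have "\<not> (path_less p r \<and> path_less r (flip i p))" if "r \<in> dyck_paths n" for r
  proof
    assume "path_less p r \<and> path_less r (flip i p)"
    moreover have "length r = length p"
      using that p by (simp add: dyck_paths_def)
    ultimately have "r = p \<or> r = flip i p"
      by (intro path_between_valley_flip[OF i]) (auto simp: path_less_def path_le_def)
    with \<open>path_less p r \<and> path_less r (flip i p)\<close> show False
      by (auto simp: path_less_def)
  qed
  with p flip_valley_in_dyck_paths[OF p i] le ne show ?thesis
    by (auto simp: covers_in_def path_less_def)
qed

text \<open>Among the positions where the heights of \<open>p\<close> and \<open>q\<close> differ, one where \<open>p\<close> is
  lowest must be a valley of \<open>p\<close>; raising it stays below \<open>q\<close> by parity.\<close>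

lemma exists_valley_flip_below:
  assumes p: "p \<in> dyck_paths n" and q: "q \<in> dyck_paths n"
    and le: "path_le p q" and ne: "p \<noteq> q"
  shows "\<exists>i\<in>valleys p. path_le (flip i p) q"
proof -
  have lp: "length p = 2 * n" and lq: "length q = 2 * n"
    using p q by (auto simp: dyck_paths_def)
  define K where "K = {k. k \<le> 2 * n \<and> height p k < height q k}"
  have leh: "height p k \<le> height q k" if "k \<le> 2 * n" for k
    using le that lp by (auto simp: path_le_def)
  have "K \<noteq> {}"
  proof
    assume "K = {}"
    then have "height p k = height q k" if "k \<le> 2 * n" for k
      using leh[OF that] that by (force simp: K_def)
    then have "p = q"
      using lp lq by (intro eq_if_heights_eq) auto
    with ne show False ..
  qed
  then obtain k where kK: "k \<in> K" and kmin: "\<And>k'. k' \<in> K \<Longrightarrow> height p k \<le> height p k'"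
  proof -
    have fin: "finite (height p ` K)" "height p ` K \<noteq> {}"
      using \<open>K \<noteq> {}\<close> by (auto simp: K_def)
    obtain k where "k \<in> K" "height p k = Min (height p ` K)"
      using Min_in[OF fin] by auto
    with that Min_le[OF fin(1)] show ?thesis
      by auto
  qed
  have k: "k \<le> 2 * n" "height p k < height q k"
    using kK by (auto simp: K_def)
  have gap: "height p k + 2 \<le> height q k"
  proof -
    have "even (height q k - height p k)"
      using even_height_plus_index[of k p] even_height_plus_index[of k q] k lp lq
      by (metis diff_add_cancel even_add even_diff)
    with k(2) show ?thesis by presburger
  qed
  have "k \<noteq> 0"
    using k(2) by (metis height_0 less_irrefl)
  moreover have "k \<noteq> 2 * n"
    using k(2) p q by (auto simp: dyck_paths_def)
  ultimately obtain j where kj: "k = Suc j" and jl: "Suc j < length p"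
    using k(1) lp by (cases k) auto
  have "\<not> p ! j"
  proof
    assume "p ! j"
    then have "j \<in> K"
      using gap kj jl lp lq height_Suc[of p j] height_Suc[of q j]
      by (auto simp: K_def split: if_splits)
    with kmin[of j] \<open>p ! j\<close> kj jl show False
      by (auto simp: height_Suc)
  qed
  moreover have "p ! k"
  proof (rule ccontr)
    assume "\<not> p ! k"
    then have "Suc k \<in> K"
      using gap kj jl lp lq height_Suc[of p k] height_Suc[of q k]
      by (auto simp: K_def split: if_splits)
    with kmin[of "Suc k"] \<open>\<not> p ! k\<close> kj jl show False
      by (auto simp: height_Suc)
  qed
  ultimately have "j \<in> valleys p" and "path_le (flip j p) q"
    using kj jl height_flip[OF jl] gap leh lp by (auto simp: valleys_def path_le_def)
  then show ?thesis ..
qed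

lemma covers_in_iff_flip_valley:
  "covers_in n p q \<longleftrightarrow> p \<in> dyck_paths n \<and> (\<exists>i\<in>valleys p. q = flip i p)"
proof
  assume c: "covers_in n p q"
  then have p: "p \<in> dyck_paths n" and q: "q \<in> dyck_paths n"
    and pq: "path_le p q" "p \<noteq> q"
    by (auto simp: covers_in_def path_less_def)
  obtain i where i: "i \<in> valleys p" "path_le (flip i p) q"
    using exists_valley_flip_below[OF p q pq] by blast
  have "flip i p \<in> dyck_paths n" "path_less p (flip i p)"
    using covers_in_flip_valley[OF p i(1)] by (auto simp: covers_in_def)
  with c i(2) have "q = flip i p"
    by (auto simp: covers_in_def path_less_def)
  with p i(1) show "p \<in> dyck_paths n \<and> (\<exists>i\<in>valleys p. q = flip i p)"
    by blast
qed (auto intro: covers_in_flip_valley)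

lemma covers_in_iff_flip_high_peak:
  assumes q: "q \<in> dyck_paths n"
  shows "covers_in n p q \<longleftrightarrow> (\<exists>i\<in>high_peaks_from 0 q. p = flip i q)"
proof
  assume "covers_in n p q"
  then obtain i where p: "p \<in> dyck_paths n" and i: "i \<in> valleys p" and qp: "q = flip i p"
    by (auto simp: covers_in_iff_flip_valley)
  from i have i': "Suc i < length p" "\<not> p ! i" "p ! Suc i"
    by (auto simp: valleys_def)
  have "i \<in> high_peaks_from 0 q"
    using i' qp height_flip[OF i'(1), of "Suc i"] dyck_paths_height_nonneg[OF p, of "Suc i"]
    by (simp add: high_peaks_from_def nth_flip)
  moreover have "p = flip i q"
    using qp flip_flip i' by simp
  ultimately show "\<exists>i\<in>high_peaks_from 0 q. p = flip i q" ..
next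
  assume "\<exists>i\<in>high_peaks_from 0 q. p = flip i q"
  then obtain i where i: "i \<in> high_peaks_from 0 q" and pq: "p = flip i q" ..
  from i have i': "Suc i < length q" "q ! i" "\<not> q ! Suc i"
    by (auto simp: high_peaks_from_def)
  have "p \<in> dyck_paths n"
    using flip_high_peak_in_dyck_paths[OF q i] pq by simp
  moreover have "i \<in> valleys p"
    using i' pq by (simp add: valleys_def nth_flip)
  moreover have "q = flip i p"
    using i' pq flip_flip by simp
  ultimately show "covers_in n p q"
    unfolding covers_in_iff_flip_valley by blast
qed

lemma sat_chains2_eq:
  "sat_chains2 n = (\<Union>b\<in>dyck_paths n.
     (\<lambda>(i, j). (flip i b, b, flip j b)) ` (high_peaks_from 0 b \<times> valleys b))"
proof (intro set_eqI iffI)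
  fix t assume "t \<in> sat_chains2 n"
  then obtain a b c where t: "t = (a, b, c)" and ab: "covers_in n a b" and bc: "covers_in n b c"
    by (auto simp: sat_chains2_def)
  have b: "b \<in> dyck_paths n"
    using bc by (simp add: covers_in_def)
  obtain i where "i \<in> high_peaks_from 0 b" "a = flip i b"
    using ab covers_in_iff_flip_high_peak[OF b] by auto
  moreover obtain j where "j \<in> valleys b" "c = flip j b"
    using bc covers_in_iff_flip_valley by auto
  ultimately show "t \<in> (\<Union>b\<in>dyck_paths n.
     (\<lambda>(i, j). (flip i b, b, flip j b)) ` (high_peaks_from 0 b \<times> valleys b))"
    using b t by auto
next
  fix t assume "t \<in> (\<Union>b\<in>dyck_paths n.
     (\<lambda>(i, j). (flip i b, b, flip j b)) ` (high_peaks_from 0 b \<times> valleys b))"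
  then obtain b i j where b: "b \<in> dyck_paths n" and i: "i \<in> high_peaks_from 0 b"
    and j: "j \<in> valleys b" and t: "t = (flip i b, b, flip j b)"
    by auto
  have "covers_in n (flip i b) b"
    using covers_in_iff_flip_high_peak[OF b] i by auto
  moreover have "covers_in n b (flip j b)"
    using covers_in_iff_flip_valley b j by auto
  ultimately show "t \<in> sat_chains2 n"
    using t by (simp add: sat_chains2_def)
qed

lemma sc2_eq_sum: "sc2 n = (\<Sum>b\<in>dyck_paths n. card (high_peaks_from 0 b) * card (valleys b))"
proof -
  have "inj_on (\<lambda>(i, j). (flip i b, b, flip j b)) (high_peaks_from 0 b \<times> valleys b)" for b
    by (auto intro!: inj_onI dest: flip_eq_flipD simp: high_peaks_from_def valleys_def)
  then have "sc2 n = (\<Sum>b\<in>dyck_paths n. card (high_peaks_from 0 b \<times> valleys b))"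
    unfolding sc2_def sat_chains2_eq by (subst card_UN_disjoint) (auto simp: card_image)
  then show ?thesis
    by (simp add: card_cartesian_product)
qed

fun valley_count :: "bool list \<Rightarrow> nat" where
  "valley_count [] = 0"
| "valley_count (x # p) = (if p \<noteq> [] \<and> \<not> x \<and> hd p then 1 else 0) + valley_count p"

fun peak_count :: "bool list \<Rightarrow> nat" where
  "peak_count [] = 0"
| "peak_count (x # p) = (if p \<noteq> [] \<and> x \<and> \<not> hd p then 1 else 0) + peak_count p"

fun high_peak_count :: "int \<Rightarrow> bool list \<Rightarrow> nat" where
  "high_peak_count h [] = 0"
| "high_peak_count h (x # p) =
     (if p \<noteq> [] \<and> x \<and> \<not> hd p \<and> 1 \<le> h then 1 else 0)
     + high_peak_count (if x then h + 1 else h - 1) p"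

lemma valleys_Cons:
  "valleys (x # p) = (if p \<noteq> [] \<and> \<not> x \<and> hd p then {0} else {}) \<union> Suc ` valleys p"
proof (intro set_eqI)
  fix i show "i \<in> valleys (x # p) \<longleftrightarrow>
    i \<in> (if p \<noteq> [] \<and> \<not> x \<and> hd p then {0} else {}) \<union> Suc ` valleys p"
    by (cases i; cases p) (auto simp: valleys_def)
qed

lemma high_peaks_from_Cons:
  "high_peaks_from h (x # p) = (if p \<noteq> [] \<and> x \<and> \<not> hd p \<and> 1 \<le> h then {0} else {})
     \<union> Suc ` high_peaks_from (if x then h + 1 else h - 1) p"
proof (intro set_eqI)
  fix i show "i \<in> high_peaks_from h (x # p) \<longleftrightarrow>
    i \<in> (if p \<noteq> [] \<and> x \<and> \<not> hd p \<and> 1 \<le> h then {0} else {})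
      \<union> Suc ` high_peaks_from (if x then h + 1 else h - 1) p"
    by (cases i; cases p) (auto simp: high_peaks_from_def algebra_simps)
qed

lemma card_valleys: "card (valleys p) = valley_count p"
  by (induction p) (auto simp: valleys_Cons card_insert_if card_image)

lemma card_high_peaks_from: "card (high_peaks_from h p) = high_peak_count h p"
  by (induction p arbitrary: h)
    (auto simp: high_peaks_from_Cons card_insert_if card_image)

lemma valley_count_append:
  "valley_count (xs @ ys) = valley_count xs + valley_count ys
     + (if xs \<noteq> [] \<and> ys \<noteq> [] \<and> \<not> last xs \<and> hd ys then 1 else 0)"
  by (induction xs) auto

lemma peak_count_append:
  "peak_count (xs @ ys) = peak_count xs + peak_count ys
     + (if xs \<noteq> [] \<and> ys \<noteq> [] \<and> last xs \<and> \<not> hd ys then 1 else 0)"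
  by (induction xs) auto

lemma high_peak_count_append:
  "high_peak_count h (xs @ ys) =
     high_peak_count h xs + high_peak_count (h + height xs (length xs)) ys
     + (if xs \<noteq> [] \<and> ys \<noteq> [] \<and> last xs \<and> \<not> hd ys \<and> 2 \<le> h + height xs (length xs)
        then 1 else 0)"
  by (induction xs arbitrary: h) (auto simp: algebra_simps)

lemma high_peak_count_dyck_from: "dyck_from k p \<Longrightarrow> high_peak_count (int k + 1) p = peak_count p"
proof (induction p arbitrary: k)
  case (Cons x p)
  then show ?case
    using Cons.IH[of "Suc k"] Cons.IH[of "k - 1"] by (cases x) (auto simp: algebra_simps of_nat_diff)
qed simp

definition dyck_join :: "bool list \<Rightarrow> bool list \<Rightarrow> bool list" where
  "dyck_join b c = True # b @ False # c"

lemma valley_count_dyck_join: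
  "dyck_from 0 b \<Longrightarrow> dyck_from 0 c \<Longrightarrow>
     valley_count (dyck_join b c) = valley_count b + valley_count c + (if c = [] then 0 else 1)"
  using dyck_from_0_hd[of c] dyck_from_0_last[of b] by (auto simp: dyck_join_def valley_count_append)

lemma peak_count_dyck_join:
  "dyck_from 0 b \<Longrightarrow> dyck_from 0 c \<Longrightarrow>
     peak_count (dyck_join b c) = peak_count b + peak_count c + (if b = [] then 1 else 0)"
  using dyck_from_0_hd[of b] dyck_from_0_last[of b] by (auto simp: dyck_join_def peak_count_append)

lemma high_peak_count_dyck_join:
  "dyck_from 0 b \<Longrightarrow> dyck_from 0 c \<Longrightarrow>
     high_peak_count 0 (dyck_join b c) = peak_count b + high_peak_count 0 c"
  using dyck_from_0_hd[of b] dyck_from_0_last[of b] dyck_from_0_height_end[of b]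
    high_peak_count_dyck_from[of 0 b]
  by (auto simp: dyck_join_def high_peak_count_append)

lemma dyck_join_inject:
  "dyck_from 0 b \<Longrightarrow> dyck_from 0 b' \<Longrightarrow> dyck_join b c = dyck_join b' c' \<Longrightarrow> b = b' \<and> c = c'"
  using dyck_from_0_split_unique[of b c b' c'] by (auto simp: dyck_join_def)

lemma bij_betw_dyck_join:
  "bij_betw (\<lambda>(k, b, c). dyck_join b c)
     (SIGMA k:{..n}. dyck_paths k \<times> dyck_paths (n - k)) (dyck_paths (Suc n))"
proof (rule bij_betw_imageI)
  show "inj_on (\<lambda>(k, b, c). dyck_join b c) (SIGMA k:{..n}. dyck_paths k \<times> dyck_paths (n - k))"
  proof (rule inj_onI, clarsimp simp: mem_dyck_paths_iff)
    fix k b c k' b' c'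
    assume eq: "dyck_join b c = dyck_join b' c'" and "dyck_from 0 b" "dyck_from 0 b'"
      and "length b = 2 * k" "length b' = 2 * k'"
    moreover have "b = b' \<and> c = c'"
      using dyck_join_inject[OF \<open>dyck_from 0 b\<close> \<open>dyck_from 0 b'\<close> eq] .
    ultimately show "k = k' \<and> b = b' \<and> c = c'"
      by simp
  qed
next
  show "(\<lambda>(k, b, c). dyck_join b c) ` (SIGMA k:{..n}. dyck_paths k \<times> dyck_paths (n - k))
    = dyck_paths (Suc n)"
  proof (intro set_eqI iffI)
    fix a assume "a \<in> (\<lambda>(k, b, c). dyck_join b c) ` (SIGMA k:{..n}. dyck_paths k \<times> dyck_paths (n - k))"
    then obtain k b c where "k \<le> n" "b \<in> dyck_paths k" "c \<in> dyck_paths (n - k)"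
      and "a = dyck_join b c"
      by auto
    then show "a \<in> dyck_paths (Suc n)"
      using dyck_from_append[of 0 b 1 "False # c"] by (auto simp: mem_dyck_paths_iff dyck_join_def)
  next
    fix a assume "a \<in> dyck_paths (Suc n)"
    then have a: "dyck_from 0 a" "length a = 2 * Suc n"
      by (auto simp: mem_dyck_paths_iff)
    then obtain a' where a': "a = True # a'" "dyck_from 1 a'"
      by (cases a) (auto split: if_splits)
    then obtain b c where bc: "a' = b @ False # c" "dyck_from 0 b" "dyck_from 0 c"
      using dyck_from_Suc_split[of 0 a'] by auto
    define k where "k = length b div 2"
    have "length b = 2 * k" "length c = 2 * (n - k)" "k \<le> n"
      using even_length_if_dyck_from_0[OF bc(2)] even_length_if_dyck_from_0[OF bc(3)] a a' bc
      by (auto simp: k_def)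
    with a' bc show "a \<in> (\<lambda>(k, b, c). dyck_join b c) `
      (SIGMA k:{..n}. dyck_paths k \<times> dyck_paths (n - k))"
      by (intro image_eqI[of _ _ "(k, b, c)"]) (auto simp: mem_dyck_paths_iff dyck_join_def)
  qed
qed

lemma sum_dyck_paths_Suc:
  "(\<Sum>a\<in>dyck_paths (Suc n). f a) =
     (\<Sum>k\<le>n. \<Sum>b\<in>dyck_paths k. \<Sum>c\<in>dyck_paths (n - k). f (dyck_join b c))"
proof -
  have "(\<Sum>a\<in>dyck_paths (Suc n). f a) =
      (\<Sum>(k, b, c)\<in>(SIGMA k:{..n}. dyck_paths k \<times> dyck_paths (n - k)). f (dyck_join b c))"
    using sum.reindex_bij_betw[OF bij_betw_dyck_join, of f] by (simp add: case_prod_unfold)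
  also have "\<dots> = (\<Sum>k\<le>n. \<Sum>b\<in>dyck_paths k. \<Sum>c\<in>dyck_paths (n - k). f (dyck_join b c))"
    by (subst sum.Sigma[symmetric]) (auto simp: sum.cartesian_product split_def)
  finally show ?thesis .
qed

definition dyck_gf :: "(bool list \<Rightarrow> real) \<Rightarrow> real fps" where
  "dyck_gf f = Abs_fps (\<lambda>n. \<Sum>a\<in>dyck_paths n. f a)"

lemma dyck_gf_nth [simp]: "dyck_gf f $ n = (\<Sum>a\<in>dyck_paths n. f a)"
  by (simp add: dyck_gf_def)

lemma dyck_gf_mult_nth:
  "(dyck_gf f * dyck_gf g) $ n =
     (\<Sum>k\<le>n. \<Sum>b\<in>dyck_paths k. \<Sum>c\<in>dyck_paths (n - k). f b * g c)"
  by (simp add: fps_mult_nth atLeast0AtMost sum_product)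

lemma dyck_gf_sum_list_mult_nth:
  "(\<Sum>(f, g)\<leftarrow>fgs. dyck_gf f * dyck_gf g) $ n =
     (\<Sum>k\<le>n. \<Sum>b\<in>dyck_paths k. \<Sum>c\<in>dyck_paths (n - k). \<Sum>(f, g)\<leftarrow>fgs. f b * g c)"
  by (induction fgs) (auto simp: dyck_gf_mult_nth sum.distrib)

lemma dyck_gf_dyck_join:
  assumes "\<And>b c. dyck_from 0 b \<Longrightarrow> dyck_from 0 c \<Longrightarrow>
    f (dyck_join b c) = (\<Sum>(g, h)\<leftarrow>fgs. g b * h c)"
  shows "dyck_gf f = fps_const (f []) + fps_X * (\<Sum>(g, h)\<leftarrow>fgs. dyck_gf g * dyck_gf h)"
proof (rule fps_ext)
  fix n show "dyck_gf f $ n = (fps_const (f []) + fps_X * (\<Sum>(g, h)\<leftarrow>fgs. dyck_gf g * dyck_gf h)) $ n"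
  proof (cases n)
    case (Suc m)
    then show ?thesis
      by (auto simp: sum_dyck_paths_Suc dyck_gf_sum_list_mult_nth assms mem_dyck_paths_iff
          intro!: sum.cong)
  qed (simp add: dyck_paths_0)
qed

abbreviation "catalan_gf \<equiv> dyck_gf (\<lambda>_. 1)"
abbreviation "valley_gf \<equiv> dyck_gf (\<lambda>b. real (valley_count b))"
abbreviation "peak_gf \<equiv> dyck_gf (\<lambda>b. real (peak_count b))"
abbreviation "high_peak_gf \<equiv> dyck_gf (\<lambda>b. real (high_peak_count 0 b))"
abbreviation "peak_valley_gf \<equiv> dyck_gf (\<lambda>b. real (peak_count b) * real (valley_count b))"
abbreviation "high_peak_valley_gf \<equiv>
  dyck_gf (\<lambda>b. real (high_peak_count 0 b) * real (valley_count b))"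

lemma dyck_gf_empty: "dyck_gf (\<lambda>b. of_bool (b = [])) = 1"
proof (rule fps_ext)
  fix n show "dyck_gf (\<lambda>b. of_bool (b = [])) $ n = 1 $ n"
    by (cases n) (auto simp: dyck_paths_0 mem_dyck_paths_iff intro: sum.neutral)
qed

lemma dyck_gf_nonempty: "dyck_gf (\<lambda>b. of_bool (b \<noteq> [])) = catalan_gf - 1"
proof (rule fps_ext)
  fix n show "dyck_gf (\<lambda>b. of_bool (b \<noteq> [])) $ n = (catalan_gf - 1) $ n"
    by (cases n) (auto simp: dyck_paths_0 mem_dyck_paths_iff intro!: arg_cong[of _ _ card])
qed

lemma catalan_gf_eq: "catalan_gf = 1 + fps_X * catalan_gf\<^sup>2"
  using dyck_gf_dyck_join[of "\<lambda>_. 1" "[(\<lambda>_. 1, \<lambda>_. 1)]"] by (simp add: power2_eq_square)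

lemma valley_gf_eq:
  "valley_gf = fps_X * (valley_gf * catalan_gf + catalan_gf * valley_gf
     + catalan_gf * (catalan_gf - 1))"
  using dyck_gf_dyck_join[of "\<lambda>b. real (valley_count b)"
      "[(\<lambda>b. real (valley_count b), \<lambda>_. 1), (\<lambda>_. 1, \<lambda>b. real (valley_count b)),
        (\<lambda>_. 1, \<lambda>b. of_bool (b \<noteq> []))]"]
  by (simp add: valley_count_dyck_join dyck_gf_nonempty add.assoc)

lemma peak_gf_eq:
  "peak_gf = fps_X * (peak_gf * catalan_gf + catalan_gf * peak_gf + catalan_gf)"
  using dyck_gf_dyck_join[of "\<lambda>b. real (peak_count b)"
      "[(\<lambda>b. real (peak_count b), \<lambda>_. 1), (\<lambda>_. 1, \<lambda>b. real (peak_count b)),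
        (\<lambda>b. of_bool (b = []), \<lambda>_. 1)]"]
  by (simp add: peak_count_dyck_join dyck_gf_empty add.assoc)

lemma high_peak_gf_eq:
  "high_peak_gf = fps_X * (peak_gf * catalan_gf + catalan_gf * high_peak_gf)"
  using dyck_gf_dyck_join[of "\<lambda>b. real (high_peak_count 0 b)"
      "[(\<lambda>b. real (peak_count b), \<lambda>_. 1), (\<lambda>_. 1, \<lambda>b. real (high_peak_count 0 b))]"]
  by (simp add: high_peak_count_dyck_join)

lemma peak_valley_gf_eq:
  "peak_valley_gf = fps_X * (peak_valley_gf * catalan_gf + peak_gf * valley_gf
     + peak_gf * (catalan_gf - 1) + valley_gf * peak_gf + catalan_gf * peak_valley_gf
     + catalan_gf * peak_gf + valley_gf + (catalan_gf - 1))"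
proof -
  have "real (peak_count (dyck_join b c)) * real (valley_count (dyck_join b c)) =
      real (peak_count b) * real (valley_count b) * 1 + real (peak_count b) * real (valley_count c)
      + real (peak_count b) * of_bool (c \<noteq> []) + real (valley_count b) * real (peak_count c)
      + 1 * (real (peak_count c) * real (valley_count c)) + 1 * real (peak_count c)
      + of_bool (b = []) * real (valley_count c) + of_bool (b = []) * of_bool (c \<noteq> [])"
    if "dyck_from 0 b" "dyck_from 0 c" for b c
    using that by (cases "b = []"; cases "c = []") (simp_all add: peak_count_dyck_join
        valley_count_dyck_join algebra_simps)
  then show ?thesis
    using dyck_gf_dyck_join[of "\<lambda>b. real (peak_count b) * real (valley_count b)"
      "[(\<lambda>b. real (peak_count b) * real (valley_count b), \<lambda>_. 1),
        (\<lambda>b. real (peak_count b), \<lambda>b. real (valley_count b)),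
        (\<lambda>b. real (peak_count b), \<lambda>b. of_bool (b \<noteq> [])),
        (\<lambda>b. real (valley_count b), \<lambda>b. real (peak_count b)),
        (\<lambda>_. 1, \<lambda>b. real (peak_count b) * real (valley_count b)),
        (\<lambda>_. 1, \<lambda>b. real (peak_count b)),
        (\<lambda>b. of_bool (b = []), \<lambda>b. real (valley_count b)),
        (\<lambda>b. of_bool (b = []), \<lambda>b. of_bool (b \<noteq> []))]"]
    by (simp add: dyck_gf_empty dyck_gf_nonempty add.assoc)
qed

lemma high_peak_valley_gf_eq:
  "high_peak_valley_gf = fps_X * (peak_valley_gf * catalan_gf + peak_gf * valley_gf
     + peak_gf * (catalan_gf - 1) + valley_gf * high_peak_gf + catalan_gf * high_peak_valley_gf
     + catalan_gf * high_peak_gf)"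
proof -
  have "real (high_peak_count 0 (dyck_join b c)) * real (valley_count (dyck_join b c)) =
      real (peak_count b) * real (valley_count b) * 1 + real (peak_count b) * real (valley_count c)
      + real (peak_count b) * of_bool (c \<noteq> []) + real (valley_count b) * real (high_peak_count 0 c)
      + 1 * (real (high_peak_count 0 c) * real (valley_count c)) + 1 * real (high_peak_count 0 c)"
    if "dyck_from 0 b" "dyck_from 0 c" for b c
    using that by (cases "c = []") (simp_all add: high_peak_count_dyck_join
        valley_count_dyck_join algebra_simps)
  then show ?thesis
    using dyck_gf_dyck_join[of "\<lambda>b. real (high_peak_count 0 b) * real (valley_count b)"
      "[(\<lambda>b. real (peak_count b) * real (valley_count b), \<lambda>_. 1),
        (\<lambda>b. real (peak_count b), \<lambda>b. real (valley_count b)),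
        (\<lambda>b. real (peak_count b), \<lambda>b. of_bool (b \<noteq> [])),
        (\<lambda>b. real (valley_count b), \<lambda>b. real (high_peak_count 0 b)),
        (\<lambda>_. 1, \<lambda>b. real (high_peak_count 0 b) * real (valley_count b)),
        (\<lambda>_. 1, \<lambda>b. real (high_peak_count 0 b))]"]
    by (simp add: dyck_gf_nonempty add.assoc)
qed

lemma dyck_statistics_system_solution:
  fixes X G V P H U M :: "'a :: idom"
  assumes G: "G = 1 + X * G\<^sup>2"
    and V: "V = X * (V * G + G * V + G * (G - 1))"
    and P: "P = X * (P * G + G * P + G)"
    and H: "H = X * (P * G + G * H)"
    and U: "U = X * (U * G + P * V + P * (G - 1) + V * P + G * U + G * P + V + (G - 1))"
    and M: "M = X * (U * G + P * V + P * (G - 1) + V * H + G * M + G * H)"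
  shows "M * (1 - 2 * X * G) ^ 3 = (1 - 2 * X * G) ^ 3 - (1 - 6 * X + 6 * X\<^sup>2)"
proof -
  define D where "D = 1 - 2 * X * G"
  define E where "E = G - 1"
  have G_inv: "G * (1 - X * G) = 1"
    using G by algebra
  have VD: "V * D = X * G * E"
    using V unfolding D_def E_def by algebra
  have PD: "P * D = X * G"
    using P unfolding D_def by algebra
  have H': "H = X * P * G\<^sup>2"
    using H G_inv by algebra
  have UD: "U * D = X * (2 * P * V + P * E + G * P + V + E)"
    using U unfolding D_def E_def by algebra
  have M': "M = X * G * (U * G + P * V + P * E + V * H + G * H)"
    using M G_inv unfolding E_def by algebra
  have "M * D ^ 3 = X\<^sup>2 * G\<^sup>2 * (2 * X\<^sup>2 * G\<^sup>2 * E + X * G * E * D + X * G\<^sup>2 * D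
      + X * G * E * D + D\<^sup>2 * E) + X ^ 3 * G ^ 3 * E * D + X\<^sup>2 * G\<^sup>2 * E * D\<^sup>2
      + X ^ 4 * G ^ 5 * E * D + X ^ 3 * G ^ 5 * D\<^sup>2"
    using M' H' UD PD VD by algebra
  also have "\<dots> = D ^ 3 - (1 - 6 * X + 6 * X\<^sup>2)"
    using G unfolding D_def E_def by algebra
  finally show ?thesis
    unfolding D_def .
qed

lemma high_peak_valley_gf_eq_closed_form:
  "high_peak_valley_gf * (1 - 2 * fps_X * catalan_gf) ^ 3 =
     (1 - 2 * fps_X * catalan_gf) ^ 3 - (1 - 6 * fps_X + 6 * fps_X\<^sup>2)"
  by (rule dyck_statistics_system_solution[OF catalan_gf_eq valley_gf_eq peak_gf_eq
        high_peak_gf_eq peak_valley_gf_eq high_peak_valley_gf_eq])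

lemma one_minus_two_X_catalan_gf_squared: "(1 - 2 * fps_X * catalan_gf)\<^sup>2 = 1 - 4 * fps_X"
  using catalan_gf_eq by algebra

lemma central_binomial_Suc:
  "(real n + 1) * real (2 * Suc n choose Suc n) = 2 * (2 * real n + 1) * real (2 * n choose n)"
proof -
  have lhs: "real (2 * Suc n choose Suc n) = fact (2 * n + 2) / (fact (n + 1) * fact (n + 1))"
    by (subst binomial_fact) auto
  have rhs: "real (2 * n choose n) = fact (2 * n) / (fact n * fact n)"
    by (subst binomial_fact) auto
  have "(fact (2 * n + 2) :: real) = (2 * real n + 2) * (2 * real n + 1) * fact (2 * n)"
    by (simp add: fact_Suc algebra_simps numeral_2_eq_2)
  moreover have "(fact (n + 1) :: real) = (real n + 1) * fact n"
    by (simp add: fact_Suc algebra_simps)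
  ultimately show ?thesis
    unfolding lhs rhs by (simp add: divide_simps) (simp add: algebra_simps)
qed

text \<open>Coefficients of \<open>(1 - 4x)\<^sup>-\<^sup>1\<^sup>/\<^sup>2\<close> and \<open>(1 - 4x)\<^sup>-\<^sup>3\<^sup>/\<^sup>2\<close>, via the differential
  equation \<open>(1 - 4x) S' = 2 S\<close>.\<close>

lemma fps_inverse_sqrt_deriv:
  fixes S :: "real fps"
  assumes S0: "S $ 0 = 1" and S: "S\<^sup>2 * (1 - 4 * fps_X) = 1"
  shows "fps_deriv S * (1 - 4 * fps_X) = 2 * S" and "fps_deriv S = 2 * S ^ 3"
proof -
  have "2 * S * (fps_deriv S * (1 - 4 * fps_X) - 2 * S) = fps_deriv (S\<^sup>2 * (1 - 4 * fps_X))"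
    by (simp add: power2_eq_square algebra_simps)
  also have "\<dots> = 0"
    by (simp add: S)
  finally have "fps_deriv S * (1 - 4 * fps_X) - 2 * S = 0"
    using S0 by (auto simp: numeral_fps_const)
  then show deriv: "fps_deriv S * (1 - 4 * fps_X) = 2 * S"
    by simp
  have "fps_deriv S = fps_deriv S * (S\<^sup>2 * (1 - 4 * fps_X))"
    by (simp add: S)
  also have "\<dots> = 2 * S ^ 3"
    using deriv by algebra
  finally show "fps_deriv S = 2 * S ^ 3" .
qed

lemma fps_inverse_sqrt_nth:
  fixes S :: "real fps"
  assumes "S $ 0 = 1" and "S\<^sup>2 * (1 - 4 * fps_X) = 1"
  shows "S $ n = real (2 * n choose n)"
proof (induction n)
  case (Suc n)
  have "(fps_deriv S * (1 - 4 * fps_X)) $ n = (2 * S) $ n"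
    using fps_inverse_sqrt_deriv(1)[OF assms] by simp
  then have "(real n + 1) * S $ Suc n = 2 * (2 * real n + 1) * S $ n"
    by (cases n) (simp_all add: numeral_fps_const algebra_simps)
  with Suc.IH central_binomial_Suc[of n] show ?case
    by (metis mult_cancel_left of_nat_Suc of_nat_neq_0 add.commute)
qed (use assms in simp)

lemma fps_inverse_sqrt_cube_nth:
  fixes S :: "real fps"
  assumes "S $ 0 = 1" and "S\<^sup>2 * (1 - 4 * fps_X) = 1"
  shows "(S ^ 3) $ n = (2 * real n + 1) * real (2 * n choose n)"
proof -
  have "2 * (S ^ 3) $ n = (real n + 1) * S $ Suc n"
    using arg_cong[OF fps_inverse_sqrt_deriv(2)[OF assms], of "\<lambda>F. F $ n"]
    by (simp add: numeral_fps_const algebra_simps)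
  also have "\<dots> = 2 * (2 * real n + 1) * real (2 * n choose n)"
    by (simp only: fps_inverse_sqrt_nth[OF assms] central_binomial_Suc)
  finally show ?thesis
    by (simp add: algebra_simps)
qed

definition inverse_sqrt_cube_coeff :: "nat \<Rightarrow> real" where
  "inverse_sqrt_cube_coeff n = (2 * real n + 1) * real (2 * n choose n)"

lemma sc2_eq_high_peak_valley_gf_nth: "real (sc2 n) = high_peak_valley_gf $ n"
  by (simp add: sc2_eq_sum card_high_peaks_from card_valleys)

lemma sc2_eq_inverse_sqrt_cube_coeffs:
  "real (sc2 n) = of_bool (n = 0) - inverse_sqrt_cube_coeff n
     + (if 1 \<le> n then 6 * inverse_sqrt_cube_coeff (n - 1) else 0)
     - (if 2 \<le> n then 6 * inverse_sqrt_cube_coeff (n - 2) else 0)"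
proof -
  define D where "D = 1 - 2 * fps_X * catalan_gf"
  define S where "S = inverse D"
  have SD: "S * D = 1"
    unfolding S_def by (rule inverse_mult_eq_1) (simp add: D_def)
  have S_nth: "(S ^ 3) $ k = inverse_sqrt_cube_coeff k" for k
  proof (rule fps_inverse_sqrt_cube_nth[unfolded inverse_sqrt_cube_coeff_def[symmetric]])
    show "S $ 0 = 1"
      by (simp add: S_def D_def)
    show "S\<^sup>2 * (1 - 4 * fps_X) = 1"
      using SD one_minus_two_X_catalan_gf_squared unfolding D_def[symmetric] by algebra
  qed
  have "high_peak_valley_gf = high_peak_valley_gf * (S * D) ^ 3"
    by (simp add: SD)
  also have "\<dots> = 1 - (1 - 6 * fps_X + 6 * fps_X\<^sup>2) * S ^ 3"
    using high_peak_valley_gf_eq_closed_form SD unfolding D_def[symmetric] by algebra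
  also have "\<dots> = 1 - (S ^ 3 - fps_X * (fps_const 6 * S ^ 3) + fps_X ^ 2 * (fps_const 6 * S ^ 3))"
    by (simp add: numeral_fps_const algebra_simps)
  finally show ?thesis
    by (simp add: sc2_eq_high_peak_valley_gf_nth fps_X_power_mult_nth S_nth)
qed

lemma inverse_sqrt_cube_coeff_Suc:
  "(real k + 1) * inverse_sqrt_cube_coeff (Suc k) = (4 * real k + 6) * inverse_sqrt_cube_coeff k"
proof -
  have "(real k + 1) * inverse_sqrt_cube_coeff (Suc k) =
      (2 * real k + 3) * ((real k + 1) * real (2 * Suc k choose Suc k))"
    unfolding inverse_sqrt_cube_coeff_def by (simp del: binomial_Suc_Suc add: algebra_simps)
  also have "\<dots> = (4 * real k + 6) * inverse_sqrt_cube_coeff k"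
    unfolding central_binomial_Suc inverse_sqrt_cube_coeff_def by (simp add: algebra_simps)
  finally show ?thesis .
qed

lemma gbinomial_minus_three_halves:
  "((-3/2 :: real) gchoose k) * (-4) ^ k = inverse_sqrt_cube_coeff k"
proof (induction k)
  case (Suc k)
  have "(real k + 1) * ((-3/2 :: real) gchoose Suc k) = (-3/2 - real k) * ((-3/2) gchoose k)"
    using gbinomial_absorption[of k "-3/2 :: real"] gbinomial_absorb_comp[of "-3/2 :: real" k]
    by (simp add: add.commute)
  then have "(real k + 1) * (((-3/2 :: real) gchoose Suc k) * (-4) ^ Suc k)
      = (-3/2 - real k) * ((-3/2) gchoose k) * (-4 * (-4) ^ k)"
    by (simp only: power_Suc mult.assoc[symmetric])
  also have "\<dots> = (4 * real k + 6) * (((-3/2) gchoose k) * (-4) ^ k)"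
    by (simp add: algebra_simps)
  also have "\<dots> = (real k + 1) * inverse_sqrt_cube_coeff (Suc k)"
    by (simp only: Suc.IH inverse_sqrt_cube_coeff_Suc)
  finally show ?case
    by (simp only: mult_cancel_left) simp
qed (simp add: inverse_sqrt_cube_coeff_def)

lemma inverse_sqrt_cube_coeff_sums:
  assumes x: "\<bar>x\<bar> < 1/4"
  shows "(\<lambda>n. inverse_sqrt_cube_coeff n * x ^ n) sums (1 / ((1 - 4 * x) * sqrt (1 - 4 * x)))"
proof -
  have "(\<lambda>n. ((-3/2) gchoose n) * (-4 * x) ^ n) sums (1 + -4 * x) powr (-3/2)"
    using x by (intro gen_binomial_real) simp
  moreover have "((-3/2) gchoose n) * (-4 * x) ^ n = inverse_sqrt_cube_coeff n * x ^ n" for n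
    by (simp only: power_mult_distrib mult.assoc[symmetric] gbinomial_minus_three_halves)
  moreover have "(1 + -4 * x) powr (-3/2) = 1 / ((1 - 4 * x) * sqrt (1 - 4 * x))"
  proof -
    have pos: "0 < 1 - 4 * x"
      using x by simp
    have "(1 - 4 * x) powr (3/2) = (1 - 4 * x) powr (1 + 1/2)"
      by simp
    also have "\<dots> = (1 - 4 * x) powr 1 * (1 - 4 * x) powr (1/2)"
      by (rule powr_add)
    also have "\<dots> = (1 - 4 * x) * sqrt (1 - 4 * x)"
      using pos by (simp add: powr_half_sqrt)
    finally show ?thesis
      using pos by (simp add: powr_minus_divide)
  qed
  ultimately show ?thesis
    by simp
qed

lemma sums_shift_power:
  fixes a :: "nat \<Rightarrow> 'a :: real_normed_field"
  assumes "(\<lambda>n. a n * x ^ n) sums s"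
  shows "(\<lambda>n. (if k \<le> n then a (n - k) else 0) * x ^ n) sums (x ^ k * s)"
proof -
  let ?f = "\<lambda>n. (if k \<le> n then a (n - k) else 0) * x ^ n"
  have "(\<lambda>i. ?f (i + k)) = (\<lambda>i. x ^ k * (a i * x ^ i))"
    by (simp add: fun_eq_iff power_add mult_ac)
  then have "(\<lambda>i. ?f (i + k)) sums (x ^ k * s)"
    using sums_mult[OF assms] by metis
  then have "?f sums (x ^ k * s + sum ?f {..<k})"
    by (rule iffD1[OF sums_iff_shift[of ?f k]])
  then show ?thesis
    by simp
qed

lemma sc2_sums:
  assumes x: "\<bar>x\<bar> < 1/4"
  shows "(\<lambda>n. real (sc2 n) * x ^ n) sums
     ((1 - 6 * x + 6 * x\<^sup>2 - (1 - 4 * x) * sqrt (1 - 4 * x)) / (- ((1 - 4 * x) * sqrt (1 - 4 * x))))"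
proof -
  define q where "q = (1 - 4 * x) * sqrt (1 - 4 * x)"
  note c = inverse_sqrt_cube_coeff_sums[OF x, folded q_def]
  have "(\<lambda>n. of_bool (n = 0)) sums (1 :: real)"
    using sums_single[of 0 "\<lambda>_. 1 :: real"] by (simp add: of_bool_def)
  from sums_diff[OF sums_add[OF sums_diff[OF this c] sums_mult[OF sums_shift_power[OF c, of 1]]]
      sums_mult[OF sums_shift_power[OF c, of 2]], of 6 6]
  have "(\<lambda>n. of_bool (n = 0) - inverse_sqrt_cube_coeff n * x ^ n
      + 6 * ((if 1 \<le> n then inverse_sqrt_cube_coeff (n - 1) else 0) * x ^ n)
      - 6 * ((if 2 \<le> n then inverse_sqrt_cube_coeff (n - 2) else 0) * x ^ n))
    sums (1 - 1 / q + 6 * (x ^ 1 * (1 / q)) - 6 * (x ^ 2 * (1 / q)))" .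
  moreover have "(\<lambda>n. real (sc2 n) * x ^ n) = (\<lambda>n. of_bool (n = 0) - inverse_sqrt_cube_coeff n * x ^ n
      + 6 * ((if 1 \<le> n then inverse_sqrt_cube_coeff (n - 1) else 0) * x ^ n)
      - 6 * ((if 2 \<le> n then inverse_sqrt_cube_coeff (n - 2) else 0) * x ^ n))"
    by (simp add: fun_eq_iff sc2_eq_inverse_sqrt_cube_coeffs algebra_simps Suc_le_eq)
  moreover have "q \<noteq> 0"
    using x by (simp add: q_def)
  then have "1 - 1 / q + 6 * (x ^ 1 * (1 / q)) - 6 * (x ^ 2 * (1 / q)) =
      (1 - 6 * x + 6 * x\<^sup>2 - q) / - q"
    by (simp add: field_simps power2_eq_square)
  ultimately show ?thesis
    unfolding q_def by simp
qed

lemma sc2_closed_form: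
  assumes "1 \<le> n"
  shows "real (sc2 n) = real (2 * n choose n) * ((real n - 1) * (real n - 2)) / (2 * (2 * real n - 1))"
proof (cases "n = 1")
  case False
  then obtain m where m: "n = Suc (Suc m)"
    using assms by (metis One_nat_def Suc_le_D not0_implies_Suc)
  define c0 where "c0 = real (2 * m choose m)"
  define c1 where "c1 = real (2 * Suc m choose Suc m)"
  define c2 where "c2 = real (2 * Suc (Suc m) choose Suc (Suc m))"
  have sc2: "real (sc2 n) = 6 * (2 * real m + 3) * c1 - (2 * real m + 5) * c2 - 6 * (2 * real m + 1) * c0"
    unfolding c0_def c1_def c2_def using m
    by (simp del: binomial_Suc_Suc add: sc2_eq_inverse_sqrt_cube_coeffs inverse_sqrt_cube_coeff_def
        algebra_simps)
  have rhs: "real (2 * n choose n) * ((real n - 1) * (real n - 2)) / (2 * (2 * real n - 1)) =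
      c2 * ((real m + 1) * real m) / (2 * (2 * real m + 3))"
    unfolding c2_def using m by (simp del: binomial_Suc_Suc add: algebra_simps)
  have e1: "(real m + 1) * c1 = 2 * (2 * real m + 1) * c0"
    using central_binomial_Suc[of m, folded c0_def c1_def] .
  have e2: "(real m + 2) * c2 = 2 * (2 * real m + 3) * c1"
    using central_binomial_Suc[of "Suc m", folded c1_def c2_def] by (simp add: algebra_simps)
  have "((real m + 1) * (real m + 2)) * (real (sc2 n) * (2 * (2 * real m + 3))) =
      ((real m + 1) * (real m + 2)) * (c2 * ((real m + 1) * real m))"
    unfolding sc2 using e1 e2 by algebra
  then have "real (sc2 n) * (2 * (2 * real m + 3)) = c2 * ((real m + 1) * real m)"
    by (simp only: mult_cancel_left) simp
  then show ?thesis
    unfolding rhs by (simp add: field_simps)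
qed (simp add: sc2_eq_inverse_sqrt_cube_coeffs inverse_sqrt_cube_coeff_def)

theorem mainTheorem4:
  shows "(\<forall>x::real. \<bar>x\<bar> < 1/4 \<longrightarrow>
           (\<lambda>n. real (sc2 n) * x ^ n) sums
             ((1 - 6*x + 6*x^2 - (1 - 4*x) * sqrt (1 - 4*x)) / (- ((1 - 4*x) * sqrt (1 - 4*x)))))
       \<and> (\<forall>n\<ge>1. real (sc2 n) = real (2*n choose n) * ((real n - 1) * (real n - 2)) / (2 * (2 * real n - 1)))"
  using sc2_sums sc2_closed_form by blast

end
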